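(* Let $(s_1,l_1,\alpha_1),\ldots,(s_i,l_i,\alpha_i)$ be the first $i$ tuples of the LZ77 parse (without self-references) of a string $S$. Then $s_i$ and $l_i$ can each be written in binary with $i$ bits.
   Context: The LZ77 parse of $S$ divides $S$ greedily from left to right into phrases. The $j$-th phrase, starting at position $u_j$, is the longest substring having an occurrence starting to the left of $u_j$, followed by the next symbol. It is represented by $(s_j,l_j,\alpha_j)$, where $s_j$ is the start position of that earlier occurrence, $l_j$ its length, and $\alpha_j=S[u_j+l_j]$. We have $s_1=l_1=0$, $u_1=1$, $e_j=u_j+l_j$, and $u_j=e_{j-1}+1$. Without self-references, $s_j+l_j\le u_j$. *)

theory Defs
  imports Main
begin

text \<open>Strings are lists; positions are 1-based: position p of S is S ! (p - 1).\<close>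

definition sym :: "'a list \<Rightarrow> nat \<Rightarrow> 'a" where
  "sym S p = S ! (p - 1)"

definition occ_at :: "'a list \<Rightarrow> nat \<Rightarrow> nat \<Rightarrow> nat \<Rightarrow> bool" where
  "occ_at S s u l \<longleftrightarrow> (\<forall>k<l. sym S (s + k) = sym S (u + k))"

definition valid_src :: "'a list \<Rightarrow> nat \<Rightarrow> nat \<Rightarrow> nat \<Rightarrow> bool" where
  "valid_src S u l s \<longleftrightarrow> 1 \<le> s \<and> s + l \<le> u \<and> occ_at S s u l"

text \<open>Length of the phrase starting at u: the longest substring starting at u with an earlier
  occurrence (no self-reference) that is still followed by a next symbol.\<close>
definition lz_len :: "'a list \<Rightarrow> nat \<Rightarrow> nat" where
  "lz_len S u = (GREATEST l. u + l \<le> length S \<and> (l = 0 \<or> (\<exists>s. valid_src S u l s)))"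

definition lz_src :: "'a list \<Rightarrow> nat \<Rightarrow> nat" where
  "lz_src S u = (if lz_len S u = 0 then 0 else (LEAST s. valid_src S u (lz_len S u) s))"

text \<open>pstart S j = u_{j+1}, the start of the (j+1)-th phrase.\<close>
primrec pstart :: "'a list \<Rightarrow> nat \<Rightarrow> nat" where
  "pstart S 0 = 1"
| "pstart S (Suc j) = pstart S j + lz_len S (pstart S j) + 1"

definition lz77_tuple :: "'a list \<Rightarrow> nat \<Rightarrow> nat \<times> nat \<times> 'a" where
  "lz77_tuple S j = (let u = pstart S (j - 1); l = lz_len S u in (lz_src S u, l, sym S (u + l)))"

end

theory Submission
  imports Defs
begin

text \<open>A source lies strictly before its phrase, so l_j < u_j and
  u_{j+1} = u_j + l_j + 1 \<le> 2 u_j; hence u_j \<le> 2^{j-1}.  Since also s_j \<le> u_j,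
  both s_j and l_j are below 2^j.\<close>

lemma lz_len_has_src:
  assumes "u \<le> length S" and "lz_len S u \<noteq> 0"
  shows "\<exists>s. valid_src S u (lz_len S u) s"
proof -
  have "u + lz_len S u \<le> length S \<and> (lz_len S u = 0 \<or> (\<exists>s. valid_src S u (lz_len S u) s))"
    unfolding lz_len_def
    by (rule GreatestI_nat[where k = 0 and b = "length S"]) (use assms(1) in auto)
  with assms(2) show ?thesis by auto
qed

lemma lz_len_less:
  assumes "u \<le> length S" and "1 \<le> u"
  shows "lz_len S u < u"
proof (cases "lz_len S u = 0")
  case False
  then obtain s where "valid_src S u (lz_len S u) s"
    using lz_len_has_src[OF assms(1)] by blast
  then show ?thesis by (simp add: valid_src_def)
qed (use assms(2) in simp)

lemma lz_src_add_lz_len_le: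
  assumes "u \<le> length S"
  shows "lz_src S u + lz_len S u \<le> u"
proof (cases "lz_len S u = 0")
  case True
  then show ?thesis by (simp add: lz_src_def)
next
  case False
  then have "valid_src S u (lz_len S u) (LEAST s. valid_src S u (lz_len S u) s)"
    using lz_len_has_src[OF assms] by (blast intro: LeastI)
  with False show ?thesis unfolding lz_src_def valid_src_def by auto
qed

lemma pstart_ge_1: "1 \<le> pstart S j"
  by (induction j) auto

lemma pstart_Suc_le_double:
  assumes "pstart S j \<le> length S"
  shows "pstart S (Suc j) \<le> 2 * pstart S j"
  using lz_len_less[OF assms pstart_ge_1] by simp

lemma pstart_le_power:
  assumes "pstart S j \<le> length S"
  shows "pstart S j \<le> 2 ^ j"
  using assms
proof (induction j)
  case (Suc j)
  then have "pstart S j \<le> length S" by simp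
  with Suc.IH pstart_Suc_le_double[OF this] show ?case by simp
qed simp

theorem lemma5:
  fixes S :: "'a list" and i :: nat
  assumes "1 \<le> i" and "pstart S (i - 1) \<le> length S"
  shows "fst (lz77_tuple S i) < 2 ^ i \<and> fst (snd (lz77_tuple S i)) < 2 ^ i"
proof -
  let ?u = "pstart S (i - 1)"
  have "?u < 2 ^ i"
    using pstart_le_power[OF assms(2)] assms(1) by (simp add: power_strict_increasing_iff le_less_trans)
  moreover have "lz_src S ?u \<le> ?u"
    using lz_src_add_lz_len_le[OF assms(2)] by simp
  moreover have "lz_len S ?u < ?u"
    using lz_len_less[OF assms(2) pstart_ge_1] .
  ultimately show ?thesis
    by (simp add: lz77_tuple_def Let_def)
qed

end
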